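(* Let $G=(V,E)$ be a graph with arboricity $a$ and unique node identifiers. Consider the following procedure, run in phases $i=1,2,\dots$. At the beginning of phase $i$, let $d_i(u)$ be the number of edges incident to $u$ not yet assigned a direction, and let $\overline{d_i}=\sum_{u\in V}d_i(u)/|\{u\in V\mid d_i(u)>0\}|$. In phase $i$, node $u$ is inactive if $d_i(u)=0$, active if $0<d_i(u)\le 2\overline{d_i}$, and waiting if $d_i(u)>2\overline{d_i}$; each undirected edge $\{u,v\}$ is directed from $u$ to $v$ if $u$ is active and $v$ is waiting, or if both are active and $\mathrm{id}(u)<\mathrm{id}(v)$. Then after $O(\log n)$ phases all edges are directed, and the resulting orientation is an $O(a)$-orientation.
   Context: $n=|V|$. The arboricity of $G$ is the minimum number of forests into which its edge set can be partitioned. An orientation assigns each edge a direction; a $k$-orientation is one in which every node has at most $k$ outgoing edges. *)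

theory Defs
  imports Complex_Main
begin

definition simple_graph :: "'a set \<Rightarrow> 'a set set \<Rightarrow> bool" where
  "simple_graph V E \<longleftrightarrow> finite V \<and>
     (\<forall>e\<in>E. \<exists>u v. u \<noteq> v \<and> u \<in> V \<and> v \<in> V \<and> e = {u, v})"

definition is_cycle :: "'a set set \<Rightarrow> 'a list \<Rightarrow> bool" where
  "is_cycle F cs \<longleftrightarrow> length cs \<ge> 3 \<and> distinct cs \<and>
     (\<forall>i < length cs. {cs ! i, cs ! ((i + 1) mod length cs)} \<in> F)"

definition is_forest :: "'a set set \<Rightarrow> bool" where
  "is_forest F \<longleftrightarrow> \<not> (\<exists>cs. is_cycle F cs)"

definition forest_partition :: "'a set set \<Rightarrow> nat \<Rightarrow> bool" where
  "forest_partition E k \<longleftrightarrow> (\<exists>f :: 'a set \<Rightarrow> nat.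
     (\<forall>e\<in>E. f e < k) \<and> (\<forall>j<k. is_forest {e\<in>E. f e = j}))"

definition arboricity :: "'a set set \<Rightarrow> nat" where
  "arboricity E = (LEAST k. forest_partition E k)"

text \<open>State of the procedure: (U, D) with U the still undirected edges and D the set
  of directed edges (u,v) meaning u \<rightarrow> v.\<close>
definition rdeg :: "'a set set \<Rightarrow> 'a \<Rightarrow> nat" where
  "rdeg U u = card {e\<in>U. u \<in> e}"

definition avg_deg :: "'a set \<Rightarrow> 'a set set \<Rightarrow> real" where
  "avg_deg V U = real (\<Sum>u\<in>V. rdeg U u) / real (card {u\<in>V. rdeg U u > 0})"

definition is_active :: "'a set \<Rightarrow> 'a set set \<Rightarrow> 'a \<Rightarrow> bool" where
  "is_active V U u \<longleftrightarrow> 0 < rdeg U u \<and> real (rdeg U u) \<le> 2 * avg_deg V U"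

definition is_waiting :: "'a set \<Rightarrow> 'a set set \<Rightarrow> 'a \<Rightarrow> bool" where
  "is_waiting V U u \<longleftrightarrow> real (rdeg U u) > 2 * avg_deg V U"

definition directs :: "'a set \<Rightarrow> ('a \<Rightarrow> nat) \<Rightarrow> 'a set set \<Rightarrow> 'a \<Rightarrow> 'a \<Rightarrow> bool" where
  "directs V ident U u v \<longleftrightarrow> {u, v} \<in> U \<and> u \<noteq> v \<and>
     ((is_active V U u \<and> is_waiting V U v) \<or>
      (is_active V U u \<and> is_active V U v \<and> ident u < ident v))"

definition phase :: "'a set \<Rightarrow> ('a \<Rightarrow> nat) \<Rightarrow> 'a set set \<times> ('a \<times> 'a) set
                      \<Rightarrow> 'a set set \<times> ('a \<times> 'a) set" where
  "phase V ident S = (let U = fst S; D = snd S in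
     ({e\<in>U. \<not> (\<exists>u v. e = {u, v} \<and> directs V ident U u v)},
      D \<union> {(u, v). directs V ident U u v}))"

definition state_after :: "'a set \<Rightarrow> 'a set set \<Rightarrow> ('a \<Rightarrow> nat) \<Rightarrow> nat
                            \<Rightarrow> 'a set set \<times> ('a \<times> 'a) set" where
  "state_after V E ident t = (phase V ident ^^ t) (E, {})"

definition out_deg :: "('a \<times> 'a) set \<Rightarrow> 'a \<Rightarrow> nat" where
  "out_deg D u = card {v. (u, v) \<in> D}"

end

theory Submission
  imports Defs
begin

text \<open>Each class of a forest partition of an edge set has at most as many edges as endpoints, so
  in every phase the average undirected degree of the nodes that still have undirected edges is
  at most twice the arboricity \<open>a\<close>. An active node directs all of its remaining edges in its
  phase (towards waiting neighbours, and by identifier between active ones), so it is active at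
  most once and its out-degree is at most \<open>2 \<cdot> 2a\<close>. A node that still has undirected edges
  after a phase was waiting in it, and by Markov's inequality fewer than half of the nodes with
  undirected edges are waiting. Hence the number of such nodes halves in every phase, and no
  undirected edge is left after \<open>\<lfloor>log\<^sub>2 n\<rfloor> + 1\<close> phases.\<close>

section \<open>Forests\<close>

lemma finite_Union_doubletons:
  assumes "finite F" "\<forall>e\<in>F. \<exists>u v. e = {u, v}"
  shows "finite (\<Union>F)"
proof (rule finite_Union)
  show "finite e" if "e \<in> F" for e using assms(2) that by auto
qed fact

lemma doubleton_other_endpoint:
  assumes "x \<in> {a, b}" "a \<noteq> b"
  obtains z where "z \<noteq> x" "{a, b} = {z, x}"
  using assms by (metis insert_commute insertE singletonD)

definition is_path :: "'a set set \<Rightarrow> 'a list \<Rightarrow> bool" where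
  "is_path F p \<longleftrightarrow> distinct p \<and> 2 \<le> length p \<and>
     (\<forall>i. Suc i < length p \<longrightarrow> {p ! i, p ! Suc i} \<in> F)"

lemma is_path_set_subset_Union:
  assumes "is_path F p"
  shows "set p \<subseteq> \<Union>F"
proof
  fix x assume "x \<in> set p"
  then obtain i where i: "i < length p" "x = p ! i" by (auto simp: in_set_conv_nth)
  show "x \<in> \<Union>F"
  proof (cases "Suc i < length p")
    case True
    then have "{p ! i, p ! Suc i} \<in> F" using assms by (simp add: is_path_def)
    then show ?thesis using i(2) by blast
  next
    case False
    then have "Suc (i - 1) < length p" "Suc (i - 1) = i"
      using assms i(1) by (auto simp: is_path_def)
    then have "{p ! (i - 1), p ! i} \<in> F" using assms unfolding is_path_def by metis
    then show ?thesis using i(2) by blast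
  qed
qed

lemma is_path_Cons:
  assumes "is_path F p" "z \<notin> set p" "{z, p ! 0} \<in> F"
  shows "is_path F (z # p)"
  unfolding is_path_def
proof (intro conjI allI impI)
  fix i assume "Suc i < length (z # p)"
  then show "{(z # p) ! i, (z # p) ! Suc i} \<in> F"
    using assms by (cases i) (auto simp: is_path_def)
qed (use assms in \<open>auto simp: is_path_def\<close>)

lemma is_cycle_take_path:
  assumes "is_path F p" "2 \<le> j" "j < length p" "{p ! j, p ! 0} \<in> F"
  shows "is_cycle F (take (Suc j) p)"
  unfolding is_cycle_def
proof (intro conjI allI impI)
  fix i assume i: "i < length (take (Suc j) p)"
  have len: "length (take (Suc j) p) = Suc j" using assms(3) by simp
  show "{take (Suc j) p ! i, take (Suc j) p ! ((i + 1) mod length (take (Suc j) p))} \<in> F"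
  proof (cases "i < j")
    case True
    then show ?thesis using assms(1,3) by (simp add: len is_path_def)
  next
    case False
    then have "i = j" using i len by simp
    then show ?thesis using assms(3,4) by simp
  qed
qed (use assms in \<open>auto simp: is_path_def\<close>)

lemma is_cycle_mono: "is_cycle F cs \<Longrightarrow> F \<subseteq> G \<Longrightarrow> is_cycle G cs"
  unfolding is_cycle_def by auto

lemma exists_longest_path:
  assumes "finite F" "\<forall>e\<in>F. \<exists>u v. u \<noteq> v \<and> e = {u, v}" "F \<noteq> {}"
  obtains p where "is_path F p" "\<And>q. is_path F q \<Longrightarrow> length q \<le> length p"
proof -
  have fin: "finite (\<Union>F)" using assms(2) by (intro finite_Union_doubletons[OF assms(1)]) blast
  have bounded: "length q < Suc (card (\<Union>F))" if "is_path F q" for q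
  proof -
    have "length q = card (set q)" using that by (simp add: is_path_def distinct_card)
    also have "\<dots> \<le> card (\<Union>F)" using card_mono[OF fin is_path_set_subset_Union[OF that]] .
    finally show ?thesis by simp
  qed
  obtain e where "e \<in> F" using assms(3) by blast
  then obtain u v where "u \<noteq> v" "{u, v} \<in> F" using assms(2) by metis
  then have "is_path F [u, v]" by (simp add: is_path_def less_Suc_eq)
  then show thesis
    using Lattices_Big.ex_has_greatest_nat[of "is_path F" "[u, v]" length] bounded that by metis
qed

text \<open>The first vertex of a longest path in a forest is a leaf: a further edge at it would
  either extend the path or close a cycle.\<close>
lemma forest_has_leaf:
  assumes fin: "finite F" and two: "\<forall>e\<in>F. \<exists>u v. u \<noteq> v \<and> e = {u, v}" and "F \<noteq> {}"
    and acyclic: "\<nexists>cs. is_cycle F cs"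
  obtains x e where "e \<in> F" "x \<in> e" "\<And>e'. e' \<in> F \<Longrightarrow> x \<in> e' \<Longrightarrow> e' = e"
proof -
  obtain p where p: "is_path F p" and longest: "\<And>q. is_path F q \<Longrightarrow> length q \<le> length p"
    using exists_longest_path[OF fin two \<open>F \<noteq> {}\<close>] by blast
  have len: "2 \<le> length p" using p by (simp add: is_path_def)
  have first_edge: "{p ! 0, p ! 1} \<in> F" using p len by (auto simp: is_path_def)
  have "e' = {p ! 0, p ! 1}" if e': "e' \<in> F" "p ! 0 \<in> e'" for e'
  proof -
    obtain a b where "a \<noteq> b" "e' = {a, b}" using two e'(1) by metis
    then obtain z where z: "z \<noteq> p ! 0" "e' = {z, p ! 0}"
      using doubleton_other_endpoint e'(2) by metis
    have "z \<in> set p"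
      using longest[OF is_path_Cons[OF p _ e'(1)[unfolded z(2)]]] by auto
    then obtain j where j: "j < length p" "z = p ! j" by (auto simp: in_set_conv_nth)
    have "j \<noteq> 0" using z(1)[unfolded j(2)] by (rule contrapos_nn) simp
    moreover have "\<not> 2 \<le> j"
      using is_cycle_take_path[OF p _ j(1)] e'(1) z j acyclic by auto
    ultimately have "j = 1" by linarith
    then show ?thesis using z j by (simp add: insert_commute)
  qed
  then show thesis using that first_edge len by (metis insertI1)
qed

lemma card_forest_le_card_Union:
  assumes "finite F" "\<forall>e\<in>F. \<exists>u v. u \<noteq> v \<and> e = {u, v}" "\<nexists>cs. is_cycle F cs"
  shows "card F \<le> card (\<Union>F)"
  using assms
proof (induction F rule: finite_remove_induct)
  case (remove F)
  obtain x e where e: "e \<in> F" "x \<in> e" and leaf: "\<And>e'. e' \<in> F \<Longrightarrow> x \<in> e' \<Longrightarrow> e' = e"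
    using forest_has_leaf[OF remove.hyps(1) remove.prems(1) remove.hyps(2) remove.prems(2)] by metis
  have fin: "finite (\<Union>F)"
    using remove.prems(1) by (intro finite_Union_doubletons[OF remove.hyps(1)]) blast
  have "card (F - {e}) \<le> card (\<Union>(F - {e}))"
  proof (rule remove.IH[OF e(1)])
    show "\<forall>e'\<in>F - {e}. \<exists>u v. u \<noteq> v \<and> e' = {u, v}" using remove.prems(1) by blast
    show "\<nexists>cs. is_cycle (F - {e}) cs" using remove.prems(2) by (meson Diff_subset is_cycle_mono)
  qed
  also have "card (\<Union>(F - {e})) \<le> card (\<Union>F - {x})"
    using fin leaf by (intro card_mono) blast+
  also have "\<dots> < card (\<Union>F)"
    using e fin by (intro psubset_card_mono) blast+
  finally show ?case
    using e(1) remove.hyps(1) by (simp add: card_Suc_Diff1)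
qed simp

lemma is_forest_subsingleton:
  assumes "\<And>e e'. e \<in> F \<Longrightarrow> e' \<in> F \<Longrightarrow> e = e'"
  shows "is_forest F"
  unfolding is_forest_def
proof
  assume "\<exists>cs. is_cycle F cs"
  then obtain cs where three: "3 \<le> length cs" and "distinct cs"
    and edges: "\<And>i. i < length cs \<Longrightarrow> {cs ! i, cs ! ((i + 1) mod length cs)} \<in> F"
    unfolding is_cycle_def by blast
  have len: "0 < length cs" "1 < length cs" "2 < length cs" using three by linarith+
  then have "{cs ! 0, cs ! 1} \<in> F" "{cs ! 1, cs ! 2} \<in> F"
    using edges[of 0] edges[of 1] by (simp_all add: numeral_2_eq_2)
  then have "{cs ! 0, cs ! 1} = {cs ! 1, cs ! 2}" by (rule assms)
  moreover have "cs ! 0 \<noteq> cs ! 1" "cs ! 0 \<noteq> cs ! 2"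
    using \<open>distinct cs\<close> len by (simp_all add: nth_eq_iff_index_eq)
  ultimately show False by (auto simp: doubleton_eq_iff)
qed

lemma forest_partition_arboricity:
  assumes "finite E"
  shows "forest_partition E (arboricity E)"
proof -
  obtain h where h: "bij_betw h E {0..<card E}" using ex_bij_betw_finite_nat[OF assms] by blast
  then have "forest_partition E (card E)"
    unfolding forest_partition_def
    by (intro exI[of _ h]) (auto simp: bij_betw_def inj_on_def intro: is_forest_subsingleton)
  then show ?thesis unfolding arboricity_def by (rule LeastI)
qed

lemma card_le_arboricity_mult_card_Union:
  assumes "finite E" "\<forall>e\<in>E. \<exists>u v. u \<noteq> v \<and> e = {u, v}" "U \<subseteq> E"
  shows "card U \<le> arboricity E * card (\<Union>U)"
proof -
  let ?a = "arboricity E"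
  obtain f where f: "\<forall>e\<in>E. f e < ?a" "\<forall>j<?a. is_forest {e\<in>E. f e = j}"
    using forest_partition_arboricity[OF assms(1)] unfolding forest_partition_def by blast
  have finU: "finite U" using assms(1,3) finite_subset by blast
  have finUU: "finite (\<Union>U)"
    using assms(2,3) by (intro finite_Union_doubletons[OF finU]) (meson subsetD)
  have "U = (\<Union>j<?a. {e \<in> U. f e = j})" using f(1) assms(3) by auto
  then have "card U \<le> (\<Sum>j<?a. card {e \<in> U. f e = j})"
    using card_UN_le[of "{..<?a}" "\<lambda>j. {e \<in> U. f e = j}"] by simp
  also have "\<dots> \<le> (\<Sum>j<?a. card (\<Union>U))"
  proof (rule sum_mono)
    fix j assume "j \<in> {..<?a}"
    then have "is_forest {e \<in> E. f e = j}" using f(2) by blast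
    moreover have "{e \<in> U. f e = j} \<subseteq> {e \<in> E. f e = j}" using assms(3) by blast
    ultimately have "\<nexists>cs. is_cycle {e \<in> U. f e = j} cs"
      unfolding is_forest_def using is_cycle_mono by blast
    then have "card {e \<in> U. f e = j} \<le> card (\<Union>{e \<in> U. f e = j})"
      using finU assms(2,3) by (auto intro!: card_forest_le_card_Union)
    also have "\<dots> \<le> card (\<Union>U)"
      using finUU by (intro card_mono) auto
    finally show "card {e \<in> U. f e = j} \<le> card (\<Union>U)" .
  qed
  finally show ?thesis by simp
qed

section \<open>Undirected degrees\<close>

lemma rdeg_pos:
  assumes "finite U" "e \<in> U" "u \<in> e"
  shows "0 < rdeg U u"
  using assms by (auto simp: rdeg_def card_gt_0_iff)

lemma rdeg_mono:
  assumes "U \<subseteq> U'" "finite U'"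
  shows "rdeg U u \<le> rdeg U' u"
  unfolding rdeg_def using assms by (intro card_mono) auto

lemma card_neighbours_le_rdeg:
  assumes "finite U" "\<And>v. v \<in> N \<Longrightarrow> {u, v} \<in> U"
  shows "card N \<le> rdeg U u"
  unfolding rdeg_def
proof (rule card_inj_on_le)
  show "inj_on (\<lambda>v. {u, v}) N" by (auto intro!: inj_onI simp: doubleton_eq_iff)
qed (use assms in auto)

lemma sum_rdeg_eq_twice_card:
  assumes "finite V" "\<forall>e\<in>U. \<exists>u v. u \<noteq> v \<and> u \<in> V \<and> v \<in> V \<and> e = {u, v}"
  shows "(\<Sum>u\<in>V. rdeg U u) = 2 * card U"
proof -
  have "U \<subseteq> Pow V" using assms(2) by fastforce
  then have finU: "finite U" using assms(1) finite_subset by blast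
  have "(\<Sum>u\<in>V. rdeg U u) = (\<Sum>u\<in>V. \<Sum>e\<in>U. if u \<in> e then 1 else 0)"
    unfolding rdeg_def using finU by (simp add: sum.inter_filter[symmetric])
  also have "\<dots> = (\<Sum>e\<in>U. \<Sum>u\<in>V. if u \<in> e then 1 else 0)"
    by (rule sum.swap)
  also have "\<dots> = (\<Sum>e\<in>U. 2)"
  proof (rule sum.cong)
    fix e assume "e \<in> U"
    then obtain u v where uv: "u \<noteq> v" "u \<in> V" "v \<in> V" "e = {u, v}" using assms(2) by metis
    have "(\<Sum>w\<in>V. if w \<in> e then 1 else 0) = card {w \<in> V. w \<in> e}"
      using assms(1) by (simp add: sum.inter_filter[symmetric])
    also have "{w \<in> V. w \<in> e} = {u, v}" using uv by auto
    finally show "(\<Sum>w\<in>V. if w \<in> e then 1 else 0) = (2::nat)" using uv(1) by simp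
  qed simp
  finally show ?thesis by simp
qed

lemma simple_graph_finite_edges:
  assumes "simple_graph V E"
  shows "finite E"
proof -
  have "E \<subseteq> Pow V" using assms unfolding simple_graph_def by fastforce
  then show ?thesis using assms finite_subset by (auto simp: simple_graph_def)
qed

lemma avg_deg_le_twice_arboricity:
  assumes simple: "simple_graph V E" and "U \<subseteq> E"
  shows "avg_deg V U \<le> 2 * real (arboricity E)"
proof -
  have finV: "finite V" using simple by (simp add: simple_graph_def)
  have finE: "finite E" using simple by (rule simple_graph_finite_edges)
  have finU: "finite U" using finE assms(2) finite_subset by blast
  have edges_E: "\<forall>e\<in>E. \<exists>u v. u \<noteq> v \<and> e = {u, v}"
    using simple unfolding simple_graph_def by meson
  have edges: "\<forall>e\<in>U. \<exists>u v. u \<noteq> v \<and> u \<in> V \<and> v \<in> V \<and> e = {u, v}"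
    using simple assms(2) unfolding simple_graph_def by (meson subsetD)
  let ?N = "card {u \<in> V. 0 < rdeg U u}"
  have endpoints: "\<Union>U \<subseteq> {u \<in> V. 0 < rdeg U u}"
  proof
    fix x assume "x \<in> \<Union>U"
    then obtain e where e: "e \<in> U" "x \<in> e" by blast
    then obtain u v where "u \<in> V" "v \<in> V" "e = {u, v}" using edges by metis
    then show "x \<in> {u \<in> V. 0 < rdeg U u}" using rdeg_pos[OF finU e] e(2) by auto
  qed
  have "card U \<le> arboricity E * card (\<Union>U)"
    by (rule card_le_arboricity_mult_card_Union[OF finE edges_E assms(2)])
  also have "\<dots> \<le> arboricity E * ?N"
    using endpoints finV by (intro mult_le_mono2 card_mono) auto
  finally have "card U \<le> arboricity E * ?N" .
  then have "real (2 * card U) \<le> 2 * real (arboricity E) * real ?N"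
    by (metis mult.assoc of_nat_le_iff of_nat_mult of_nat_numeral mult_le_mono2)
  then show ?thesis
    unfolding avg_deg_def sum_rdeg_eq_twice_card[OF finV edges]
    by (cases "?N = 0") (simp_all add: divide_le_eq)
qed

lemma active_or_waiting: "0 < rdeg U u \<Longrightarrow> is_active V U u \<or> is_waiting V U u"
  by (auto simp: is_active_def is_waiting_def)

lemma card_above_twice_mean_le_half:
  fixes f :: "'a \<Rightarrow> nat"
  assumes "finite A"
  defines "P \<equiv> {x \<in> A. 0 < f x}" and "S \<equiv> real (\<Sum>x\<in>A. f x)"
  shows "2 * card {x \<in> A. real (f x) > 2 * (S / real (card P))} \<le> card P"
proof (cases "{x \<in> A. real (f x) > 2 * (S / real (card P))} = {}")
  case False
  define H where "H = {x \<in> A. real (f x) > 2 * (S / real (card P))}"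
  have "H \<noteq> {}" "finite H" using False assms(1) by (simp_all add: H_def)
  have "0 \<le> S / real (card P)" unfolding S_def by (intro divide_nonneg_nonneg of_nat_0_le_iff)
  then have "H \<subseteq> P" by (auto simp: H_def P_def)
  then have N: "0 < real (card P)"
    using \<open>H \<noteq> {}\<close> assms(1) by (auto simp: P_def card_gt_0_iff)
  have "(\<Sum>x\<in>H. real (f x)) \<le> S"
    unfolding S_def of_nat_sum using assms(1) by (intro sum_mono2) (auto simp: H_def)
  have "2 * S < real (f x) * real (card P)" if "x \<in> H" for x
    using that N by (simp add: H_def pos_divide_less_eq mult.commute)
  then have "(\<Sum>x\<in>H. 2 * S) < (\<Sum>x\<in>H. real (f x) * real (card P))"
    using \<open>H \<noteq> {}\<close> \<open>finite H\<close> by (intro sum_strict_mono)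
  also have "\<dots> = (\<Sum>x\<in>H. real (f x)) * real (card P)"
    by (simp add: sum_distrib_right)
  also have "\<dots> \<le> S * real (card P)"
    using \<open>(\<Sum>x\<in>H. real (f x)) \<le> S\<close> N by (intro mult_right_mono) auto
  finally have "S * (2 * real (card H)) < S * real (card P)" by (simp add: algebra_simps)
  moreover have "0 \<le> S" unfolding S_def by (rule of_nat_0_le_iff)
  ultimately have "2 * real (card H) < real (card P)" by (simp add: mult_less_cancel_left)
  then show ?thesis by (simp add: H_def)
qed (metis card.empty le0 mult_0_right)

section \<open>The phases of the procedure\<close>

locale orientation_run =
  fixes V :: "'a set" and E :: "'a set set" and ident :: "'a \<Rightarrow> nat"
  assumes simple: "simple_graph V E" and ident_inj: "inj_on ident V"
begin

text \<open>\<open>pending t\<close> and \<open>oriented t\<close> are the undirected and the directed edges after \<open>t\<close>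
  phases, i.e.\ at the beginning of phase \<open>t + 1\<close> of the paper.\<close>

abbreviation pending :: "nat \<Rightarrow> 'a set set" where
  "pending t \<equiv> fst (state_after V E ident t)"

abbreviation oriented :: "nat \<Rightarrow> ('a \<times> 'a) set" where
  "oriented t \<equiv> snd (state_after V E ident t)"

abbreviation remaining :: "nat \<Rightarrow> 'a set" where
  "remaining t \<equiv> {u \<in> V. 0 < rdeg (pending t) u}"

lemma pending_0: "pending 0 = E"
  by (simp add: state_after_def)

lemma pending_Suc:
  "pending (Suc t) = {e \<in> pending t. \<nexists>u v. e = {u, v} \<and> directs V ident (pending t) u v}"
  by (simp add: state_after_def phase_def Let_def)

lemma oriented_0: "oriented 0 = {}"
  by (simp add: state_after_def)

lemma oriented_Suc:
  "oriented (Suc t) = oriented t \<union> {(u, v). directs V ident (pending t) u v}"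
  by (simp add: state_after_def phase_def Let_def)

lemma finite_V: "finite V"
  using simple by (simp add: simple_graph_def)

lemma pending_antimono: "s \<le> t \<Longrightarrow> pending t \<subseteq> pending s"
  by (induction t rule: dec_induct) (auto simp: pending_Suc)

lemma pending_subset: "pending t \<subseteq> E"
  using pending_antimono[of 0 t] by (simp add: pending_0)

lemma finite_pending: "finite (pending t)"
  using pending_subset simple_graph_finite_edges[OF simple] finite_subset by blast

lemma pending_edge:
  assumes "e \<in> pending t" "u \<in> e"
  obtains w where "w \<noteq> u" "u \<in> V" "w \<in> V" "e = {u, w}"
proof -
  have "e \<in> E" using assms(1) pending_subset by blast
  then obtain a b where ab: "a \<noteq> b" "a \<in> V" "b \<in> V" "e = {a, b}"
    using simple unfolding simple_graph_def by metis
  then obtain w where "w \<noteq> u" "e = {w, u}"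
    using doubleton_other_endpoint[of u a b] assms(2) by metis
  moreover have "u \<in> V" "w \<in> V" using ab calculation by auto
  ultimately show thesis using that by (simp add: insert_commute)
qed

lemma rdeg_pending_antimono: "s \<le> t \<Longrightarrow> rdeg (pending t) u \<le> rdeg (pending s) u"
  by (intro rdeg_mono pending_antimono finite_pending)

text \<open>An active node loses all its undirected edges in its phase: a waiting neighbour receives
  the edge from it, and between two active neighbours the identifiers, which are distinct,
  decide the direction.\<close>
lemma active_clears_node:
  assumes active: "is_active V (pending t) u"
  shows "rdeg (pending (Suc t)) u = 0"
proof (rule ccontr)
  let ?U = "pending t"
  assume "rdeg (pending (Suc t)) u \<noteq> 0"
  then obtain e where "e \<in> pending (Suc t)" "u \<in> e"
    unfolding rdeg_def by (metis (no_types, lifting) card.empty empty_Collect_eq)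
  then have e: "e \<in> ?U" "u \<in> e" and kept: "\<nexists>a b. e = {a, b} \<and> directs V ident ?U a b"
    by (auto simp: pending_Suc)
  obtain w where w: "w \<noteq> u" "u \<in> V" "w \<in> V" "e = {u, w}" using pending_edge[OF e] .
  have "w \<in> e" using w(4) by blast
  then have "is_active V ?U w \<or> is_waiting V ?U w"
    by (intro active_or_waiting rdeg_pos[OF finite_pending e(1)])
  moreover have "ident u \<noteq> ident w" using ident_inj w by (metis inj_onD)
  ultimately have "directs V ident ?U u w \<or> directs V ident ?U w u"
    using active e(1) w by (auto simp: directs_def insert_commute)
  then show False using kept w(4) by (metis insert_commute)
qed

lemma active_once:
  assumes "is_active V (pending s) u" "is_active V (pending t) u"
  shows "s = t"
proof (rule ccontr)
  assume "s \<noteq> t"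
  then obtain a b where "a < b" "is_active V (pending a) u" "is_active V (pending b) u"
    using assms by (metis linorder_neqE_nat)
  then have "rdeg (pending b) u \<le> rdeg (pending (Suc a)) u"
    by (intro rdeg_pending_antimono) simp
  also have "\<dots> = 0" using active_clears_node \<open>is_active V (pending a) u\<close> .
  finally show False using \<open>is_active V (pending b) u\<close> by (simp add: is_active_def)
qed

lemma oriented_imp_directs: "(u, v) \<in> oriented t \<Longrightarrow> \<exists>s<t. directs V ident (pending s) u v"
  by (induction t) (auto simp: oriented_0 oriented_Suc less_Suc_eq)

text \<open>All edges a node directs outwards are directed in the single phase in which it is
  active, when its undirected degree is at most twice the average degree.\<close>
lemma out_deg_oriented_le: "real (out_deg (oriented t) u) \<le> 4 * real (arboricity E)"
proof (cases "\<exists>s<t. is_active V (pending s) u")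
  case False
  then have "{v. (u, v) \<in> oriented t} = {}"
    using oriented_imp_directs by (fastforce simp: directs_def)
  then show ?thesis by (simp add: out_deg_def)
next
  case True
  then obtain s where s: "is_active V (pending s) u" by blast
  have "{u, v} \<in> pending s" if uv: "(u, v) \<in> oriented t" for v
  proof -
    obtain s' where "directs V ident (pending s') u v"
      using oriented_imp_directs[OF uv] by blast
    moreover from this have "s' = s" using active_once s by (auto simp: directs_def)
    ultimately show ?thesis by (simp add: directs_def)
  qed
  then have "out_deg (oriented t) u \<le> rdeg (pending s) u"
    unfolding out_deg_def by (intro card_neighbours_le_rdeg[OF finite_pending]) simp
  then have "real (out_deg (oriented t) u) \<le> real (rdeg (pending s) u)" by simp
  also have "real (rdeg (pending s) u) \<le> 2 * avg_deg V (pending s)"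
    using s by (simp add: is_active_def)
  also have "\<dots> \<le> 4 * real (arboricity E)"
    using avg_deg_le_twice_arboricity[OF simple pending_subset] by simp
  finally show ?thesis by simp
qed

lemma remaining_Suc_subset_waiting:
  "remaining (Suc t) \<subseteq> {u \<in> V. is_waiting V (pending t) u}"
proof
  fix u assume u: "u \<in> remaining (Suc t)"
  then have "0 < rdeg (pending t) u"
    using rdeg_pending_antimono[of t "Suc t" u] by simp
  then have "is_active V (pending t) u \<or> is_waiting V (pending t) u"
    by (rule active_or_waiting)
  moreover have "\<not> is_active V (pending t) u"
    using u active_clears_node by fastforce
  ultimately show "u \<in> {u \<in> V. is_waiting V (pending t) u}"
    using u by blast
qed

lemma card_remaining_Suc: "2 * card (remaining (Suc t)) \<le> card (remaining t)"
proof -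
  have "card (remaining (Suc t)) \<le> card {u \<in> V. is_waiting V (pending t) u}"
    using remaining_Suc_subset_waiting finite_V by (intro card_mono) auto
  also have "2 * \<dots> \<le> card (remaining t)"
    using card_above_twice_mean_le_half[OF finite_V, of "rdeg (pending t)"]
    by (simp add: is_waiting_def avg_deg_def)
  finally show ?thesis by simp
qed

lemma two_power_mult_card_remaining: "2 ^ t * card (remaining t) \<le> card V"
proof (induction t)
  case 0
  show ?case using finite_V by (simp add: card_mono)
next
  case (Suc t)
  have "2 ^ Suc t * card (remaining (Suc t)) \<le> 2 ^ t * card (remaining t)"
    using card_remaining_Suc[of t] by simp
  then show ?case using Suc.IH by linarith
qed

lemma pending_eq_empty:
  assumes "card V < 2 ^ t"
  shows "pending t = {}"
proof (rule ccontr)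
  assume "pending t \<noteq> {}"
  then obtain e where e: "e \<in> pending t" by blast
  then have "e \<in> E" using pending_subset by blast
  then obtain u v where "u \<in> V" "e = {u, v}" using simple unfolding simple_graph_def by metis
  then have "u \<in> remaining t" using rdeg_pos[OF finite_pending e] by simp
  then have "0 < card (remaining t)" using finite_V by (auto simp: card_gt_0_iff)
  then have "2 ^ t \<le> 2 ^ t * card (remaining t)" by simp
  also have "\<dots> \<le> card V" by (rule two_power_mult_card_remaining)
  finally show False using assms by simp
qed

end

lemma nat_floor_log2_Suc_bounds:
  fixes n :: nat
  defines "k \<equiv> nat \<lfloor>log 2 (real n)\<rfloor> + 1"
  shows "real k \<le> log 2 (real n) + 1" and "n < 2 ^ k"
proof -
  have "0 \<le> log 2 (real n)" by (cases "n = 0") (simp_all add: log_def)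
  then have k: "real k = real_of_int \<lfloor>log 2 (real n)\<rfloor> + 1" by (simp add: k_def)
  then show "real k \<le> log 2 (real n) + 1" by linarith
  show "n < 2 ^ k"
  proof (cases "n = 0")
    case False
    have "log 2 (real n) < real k" using k by linarith
    then have "real n < 2 ^ k" using False by (simp add: log_less_iff powr_realpow)
    then show ?thesis by (metis of_nat_less_iff of_nat_numeral of_nat_power)
  qed simp
qed

theorem lemma4p1:
  "\<exists>c1 c2 :: real. c1 > 0 \<and> c2 > 0 \<and>
    (\<forall>(V :: 'a set) (E :: 'a set set) (ident :: 'a \<Rightarrow> nat).
       simple_graph V E \<and> inj_on ident V \<longrightarrow>
       (\<exists>T :: nat. real T \<le> c1 * (log 2 (real (card V)) + 1) \<and>
          fst (state_after V E ident T) = {} \<and>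
          (\<forall>u\<in>V. real (out_deg (snd (state_after V E ident T)) u)
                     \<le> c2 * real (arboricity E))))"
proof (rule exI[of _ 1], rule exI[of _ 4], intro conjI allI impI)
  fix V :: "'a set" and E :: "'a set set" and ident :: "'a \<Rightarrow> nat"
  assume "simple_graph V E \<and> inj_on ident V"
  then interpret orientation_run V E ident by unfold_locales auto
  define T where "T = nat \<lfloor>log 2 (real (card V))\<rfloor> + 1"
  show "\<exists>T. real T \<le> 1 * (log 2 (real (card V)) + 1) \<and> pending T = {} \<and>
      (\<forall>u\<in>V. real (out_deg (oriented T) u) \<le> 4 * real (arboricity E))"
    using nat_floor_log2_Suc_bounds[of "card V", folded T_def] pending_eq_empty out_deg_oriented_le
    by auto
qed simp_all

end
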